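(* If an undirected graph $\mathcal G$ can be represented with a set of $t$ types, then $\nu(\mathcal G)\le t/3$.
   Context: An undirected graph $\mathcal G=(V,E)$ can be represented by a set of types $T$ if there is a map $f:V\to T$ such that for any $t_1,t_2\in T$, either every pair of distinct vertices $u,v$ with $f(u)=t_1$, $f(v)=t_2$ is an edge, or no such pair is an edge; moreover (standing convention) no edge joins two vertices of the same type. A set of odd cycles $\{c_1,\dots,c_l\}$ is independent if the cycles are pairwise vertex-disjoint and no edge joins a vertex of $c_i$ to a vertex of $c_j$ for $i\ne j$; $\nu(\mathcal G)$ is the maximum size of an independent set of odd cycles of $\mathcal G$. *)

theory Defs
  imports Complex_Main
begin

definition simple_graph :: "'a set \<Rightarrow> ('a \<Rightarrow> 'a \<Rightarrow> bool) \<Rightarrow> bool" where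
  "simple_graph V E \<longleftrightarrow> finite V \<and> (\<forall>u v. E u v \<longrightarrow> u \<in> V \<and> v \<in> V)
     \<and> (\<forall>u v. E u v \<longrightarrow> E v u) \<and> (\<forall>u. \<not> E u u)"

definition represented_by :: "'a set \<Rightarrow> ('a \<Rightarrow> 'a \<Rightarrow> bool) \<Rightarrow> 'b set \<Rightarrow> bool" where
  "represented_by V E T \<longleftrightarrow> (\<exists>f. (\<forall>v\<in>V. f v \<in> T) \<and>
     (\<forall>t1\<in>T. \<forall>t2\<in>T.
        (\<forall>u\<in>V. \<forall>v\<in>V. u \<noteq> v \<and> f u = t1 \<and> f v = t2 \<longrightarrow> E u v) \<or>
        (\<forall>u\<in>V. \<forall>v\<in>V. u \<noteq> v \<and> f u = t1 \<and> f v = t2 \<longrightarrow> \<not> E u v)) \<and>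
     (\<forall>u\<in>V. \<forall>v\<in>V. E u v \<longrightarrow> f u \<noteq> f v))"

definition odd_cycle :: "'a set \<Rightarrow> ('a \<Rightarrow> 'a \<Rightarrow> bool) \<Rightarrow> 'a list \<Rightarrow> bool" where
  "odd_cycle V E c \<longleftrightarrow> length c \<ge> 3 \<and> odd (length c) \<and> distinct c \<and> set c \<subseteq> V \<and>
     (\<forall>i < length c. E (c ! i) (c ! ((i + 1) mod length c)))"

definition indep_odd_cycles :: "'a set \<Rightarrow> ('a \<Rightarrow> 'a \<Rightarrow> bool) \<Rightarrow> 'a list set \<Rightarrow> bool" where
  "indep_odd_cycles V E C \<longleftrightarrow> (\<forall>c\<in>C. odd_cycle V E c) \<and>
     (\<forall>c1\<in>C. \<forall>c2\<in>C. c1 \<noteq> c2 \<longrightarrow>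
        set c1 \<inter> set c2 = {} \<and> (\<forall>u\<in>set c1. \<forall>v\<in>set c2. \<not> E u v))"

definition nu :: "'a set \<Rightarrow> ('a \<Rightarrow> 'a \<Rightarrow> bool) \<Rightarrow> nat" where
  "nu V E = Max {card C | C. indep_odd_cycles V E C}"

end

theory Submission
  imports Defs
begin

text \<open>A type map f is a proper colouring, and two vertices of the same type have the same
neighbours apart from each other.  Hence an odd cycle, not being 2-colourable, meets at least
three types; and the types met by two independent odd cycles are disjoint, since a vertex of
one cycle sharing its type with a vertex of the other would be adjacent to that vertex's
neighbour on the other cycle.  So t types accommodate at most t/3 independent odd cycles.\<close>

definition type_map :: "'a set \<Rightarrow> ('a \<Rightarrow> 'a \<Rightarrow> bool) \<Rightarrow> 'b set \<Rightarrow> ('a \<Rightarrow> 'b) \<Rightarrow> bool" where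
  "type_map V E T f \<longleftrightarrow> (\<forall>v\<in>V. f v \<in> T) \<and>
     (\<forall>t1\<in>T. \<forall>t2\<in>T.
        (\<forall>u\<in>V. \<forall>v\<in>V. u \<noteq> v \<and> f u = t1 \<and> f v = t2 \<longrightarrow> E u v) \<or>
        (\<forall>u\<in>V. \<forall>v\<in>V. u \<noteq> v \<and> f u = t1 \<and> f v = t2 \<longrightarrow> \<not> E u v)) \<and>
     (\<forall>u\<in>V. \<forall>v\<in>V. E u v \<longrightarrow> f u \<noteq> f v)"

lemma represented_by_iff_type_map: "represented_by V E T \<longleftrightarrow> (\<exists>f. type_map V E T f)"
  unfolding represented_by_def type_map_def ..

lemma type_map_in_types: "type_map V E T f \<Longrightarrow> v \<in> V \<Longrightarrow> f v \<in> T"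
  unfolding type_map_def by blast

lemma type_map_proper: "type_map V E T f \<Longrightarrow> u \<in> V \<Longrightarrow> v \<in> V \<Longrightarrow> E u v \<Longrightarrow> f u \<noteq> f v"
  unfolding type_map_def by blast

lemma type_map_same_type_adjacent:
  assumes f: "type_map V E T f" and V: "u \<in> V" "v \<in> V" "w \<in> V"
    and "f u = f v" "E u w" "v \<noteq> w"
  shows "E v w"
proof -
  have "u \<noteq> w" using type_map_proper[OF f V(1,3) \<open>E u w\<close>] by blast
  have "f u \<in> T" "f w \<in> T" using f V by (auto intro: type_map_in_types)
  then have "(\<forall>x\<in>V. \<forall>y\<in>V. x \<noteq> y \<and> f x = f u \<and> f y = f w \<longrightarrow> E x y) \<or>
      (\<forall>x\<in>V. \<forall>y\<in>V. x \<noteq> y \<and> f x = f u \<and> f y = f w \<longrightarrow> \<not> E x y)"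
    using f unfolding type_map_def by blast
  then show ?thesis using V assms(5-7) \<open>u \<noteq> w\<close> by auto
qed

lemma odd_cycle_successor:
  assumes "odd_cycle V E c" "u \<in> set c"
  shows "\<exists>w\<in>set c. E u w"
proof -
  obtain i where i: "i < length c" "c ! i = u" using assms(2) by (metis in_set_conv_nth)
  then have "E u (c ! ((i + 1) mod length c))" using assms(1) unfolding odd_cycle_def by blast
  moreover have "c ! ((i + 1) mod length c) \<in> set c"
    using i(1) by (intro nth_mem mod_less_divisor) linarith
  ultimately show ?thesis by blast
qed

lemma odd_cycle_not_two_coloured:
  assumes c: "odd_cycle V E c"
    and proper: "\<And>u v. u \<in> set c \<Longrightarrow> v \<in> set c \<Longrightarrow> E u v \<Longrightarrow> f u \<noteq> f v"
    and two: "f ` set c \<subseteq> {a, b}"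
  shows False
proof -
  define k where "k = length c"
  have "k \<ge> 3" "odd k" and edge: "\<And>i. i < k \<Longrightarrow> E (c ! i) (c ! ((i + 1) mod k))"
    using c unfolding odd_cycle_def k_def by auto
  have coloured: "f (c ! j) \<in> {a, b}" if "j < k" for j
    using two nth_mem that unfolding k_def by blast
  have adjacent_differ: "f (c ! i) \<noteq> f (c ! ((i + 1) mod k))" if "i < k" for i
  proof -
    have "(i + 1) mod k < k" using that by (intro mod_less_divisor) linarith
    then show ?thesis using proper[OF nth_mem nth_mem edge[OF that]] that unfolding k_def by blast
  qed
  have alternate: "f (c ! i) = f (c ! 0) \<longleftrightarrow> even i" if "i < k" for i
    using that
  proof (induction i)
    case 0
    then show ?case by simp
  next
    case (Suc i)
    have "f (c ! i) \<noteq> f (c ! Suc i)" using adjacent_differ[of i] Suc.prems by simp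
    moreover have "f (c ! i) \<in> {a, b}" "f (c ! Suc i) \<in> {a, b}" "f (c ! 0) \<in> {a, b}"
      using coloured[of i] coloured[of "Suc i"] coloured[of 0] Suc.prems by simp_all
    ultimately have "f (c ! Suc i) = f (c ! 0) \<longleftrightarrow> f (c ! i) \<noteq> f (c ! 0)"
      by (elim insertE emptyE; simp)
    with Suc show ?case by simp
  qed
  have "(k - 1 + 1) mod k = 0" using \<open>k \<ge> 3\<close> by simp
  then have "f (c ! (k - 1)) \<noteq> f (c ! 0)" using adjacent_differ[of "k - 1"] \<open>k \<ge> 3\<close> by simp
  moreover have "even (k - 1)" using \<open>odd k\<close> \<open>k \<ge> 3\<close> by simp
  ultimately show False using alternate[of "k - 1"] \<open>k \<ge> 3\<close> by simp
qed

lemma card_le_2_subset_doubleton: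
  assumes "finite A" "card A \<le> 2"
  obtains a b where "A \<subseteq> {a, b}"
proof -
  consider "card A = 0" | "card A = 1" | "card A = 2" using assms(2) by linarith
  then show ?thesis
  proof cases
    case 1
    then show ?thesis using assms(1) that by simp
  next
    case 2
    then show ?thesis using that by (auto simp: card_1_singleton_iff)
  next
    case 3
    then show ?thesis using that by (auto simp: card_2_iff)
  qed
qed

lemma odd_cycle_card_colours:
  assumes "odd_cycle V E c"
    and "\<And>u v. u \<in> set c \<Longrightarrow> v \<in> set c \<Longrightarrow> E u v \<Longrightarrow> f u \<noteq> f v"
  shows "3 \<le> card (f ` set c)"
proof (rule ccontr)
  assume "\<not> 3 \<le> card (f ` set c)"
  then obtain a b where "f ` set c \<subseteq> {a, b}"
    using card_le_2_subset_doubleton[of "f ` set c"] by force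
  with assms show False by (rule odd_cycle_not_two_coloured)
qed

lemma indep_odd_cycles_disjoint_types:
  assumes f: "type_map V E T f" and C: "indep_odd_cycles V E C"
    and "c1 \<in> C" "c2 \<in> C" "c1 \<noteq> c2"
  shows "f ` set c1 \<inter> f ` set c2 = {}"
proof (rule ccontr)
  assume "f ` set c1 \<inter> f ` set c2 \<noteq> {}"
  then obtain u v where u: "u \<in> set c1" and v: "v \<in> set c2" and "f u = f v" by blast
  have c1: "odd_cycle V E c1" and c2: "odd_cycle V E c2"
    using C assms(3,4) unfolding indep_odd_cycles_def by simp_all
  have disjoint: "set c1 \<inter> set c2 = {}" and no_edge: "\<forall>x\<in>set c2. \<forall>y\<in>set c1. \<not> E x y"
    using C assms(3-5) unfolding indep_odd_cycles_def by metis+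
  obtain w where w: "w \<in> set c1" "E u w" using odd_cycle_successor[OF c1 u] by blast
  have "set c1 \<subseteq> V" "set c2 \<subseteq> V" using c1 c2 unfolding odd_cycle_def by auto
  moreover have "v \<noteq> w" using v w(1) disjoint by blast
  ultimately have "E v w"
    using type_map_same_type_adjacent[OF f _ _ _ \<open>f u = f v\<close> \<open>E u w\<close>] u v w(1) by (meson subsetD)
  then show False using no_edge v w(1) by blast
qed

lemma indep_odd_cycles_card_le:
  assumes "finite T" and f: "type_map V E T f" and C: "indep_odd_cycles V E C" "finite C"
  shows "3 * card C \<le> card T"
proof -
  have cycles: "\<And>c. c \<in> C \<Longrightarrow> odd_cycle V E c" using C(1) unfolding indep_odd_cycles_def by blast
  then have in_V: "\<And>c. c \<in> C \<Longrightarrow> set c \<subseteq> V" unfolding odd_cycle_def by blast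
  have "3 * card C = (\<Sum>c\<in>C. 3)" by simp
  also have "\<dots> \<le> (\<Sum>c\<in>C. card (f ` set c))"
    using cycles in_V type_map_proper[OF f] by (intro sum_mono odd_cycle_card_colours) blast+
  also have "\<dots> = card (\<Union>c\<in>C. f ` set c)"
    using C(2) indep_odd_cycles_disjoint_types[OF f C(1)] by (simp add: card_UN_disjoint)
  also have "\<dots> \<le> card T"
    using in_V type_map_in_types[OF f] by (intro card_mono \<open>finite T\<close>) blast
  finally show ?thesis .
qed

lemma indep_odd_cycles_subset_lists:
  assumes "finite V" "indep_odd_cycles V E C"
  shows "C \<subseteq> {xs. set xs \<subseteq> V \<and> length xs \<le> card V}"
proof
  fix c assume "c \<in> C"
  then have "set c \<subseteq> V" "distinct c"
    using assms(2) unfolding indep_odd_cycles_def odd_cycle_def by auto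
  then show "c \<in> {xs. set xs \<subseteq> V \<and> length xs \<le> card V}"
    using assms(1) by (simp add: card_mono flip: distinct_card)
qed

lemma nu_attained:
  assumes "finite V"
  obtains C where "indep_odd_cycles V E C" "finite C" "card C = nu V E"
proof -
  define L where "L = {xs. set xs \<subseteq> V \<and> length xs \<le> card V}"
  have "finite L" unfolding L_def using finite_lists_length_le[OF assms] .
  then have fin: "finite C" if "indep_odd_cycles V E C" for C
    using indep_odd_cycles_subset_lists[OF assms that] finite_subset L_def by blast
  have "{card C | C. indep_odd_cycles V E C} \<subseteq> card ` Pow L"
    using indep_odd_cycles_subset_lists[OF assms] L_def by blast
  then have "finite {card C | C. indep_odd_cycles V E C}"
    using \<open>finite L\<close> finite_subset by blast
  moreover have "indep_odd_cycles V E {}" unfolding indep_odd_cycles_def by simp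
  ultimately have "nu V E \<in> {card C | C. indep_odd_cycles V E C}"
    unfolding nu_def by (intro Max_in) auto
  then obtain C where C: "indep_odd_cycles V E C" "card C = nu V E" by auto
  show ?thesis using that[OF C(1) fin[OF C(1)] C(2)] .
qed

theorem mainTheorem7:
  fixes V :: "'a set" and E :: "'a \<Rightarrow> 'a \<Rightarrow> bool" and T :: "'b set"
  assumes "simple_graph V E"
    and "finite T"
    and "represented_by V E T"
  shows "real (nu V E) \<le> real (card T) / 3"
proof -
  obtain f where f: "type_map V E T f" using assms(3) represented_by_iff_type_map by blast
  obtain C where C: "indep_odd_cycles V E C" "finite C" "card C = nu V E"
    using nu_attained assms(1) unfolding simple_graph_def by blast
  have "3 * nu V E \<le> card T" using indep_odd_cycles_card_le[OF assms(2) f C(1,2)] C(3) by simp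
  then show ?thesis by linarith
qed

end
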